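(* Let $L$ be a label set containing $a$, and let $\mathcal{D}$ be the category of finite rooted $L$-labeled transition systems with root-preserving, label-preserving homomorphisms. Call a sieve $S$ on an object $G$ naive-sim-covering if for every finite rooted $L$-labeled tree $T$ admitting a homomorphism $T\to G$, some homomorphism $T\to G$ belongs to $S$. Then this covering predicate satisfies the maximality and transitivity axioms of a Grothendieck topology but not the stability (pullback) axiom. Explicitly: let $\mathrm{traceLTS}[a]$ have vertices $0$ (root) and $1$ with edge $0\xrightarrow{a}1$; let $\mathrm{fanLTS}[a,a]$ have vertices $0$ (root), $1$, $2$ with edges $0\xrightarrow{a}1$ and $0\xrightarrow{a}2$; let $f_R,f_L:\mathrm{traceLTS}[a]\to\mathrm{fanLTS}[a,a]$ send $1$ to $2$ and to $1$ respectively. The sieve $S$ on $\mathrm{fanLTS}[a,a]$ generated by $f_R$ is naive-sim-covering, while its pullback $f_L^*(S)$ on $\mathrm{traceLTS}[a]$ is not naive-sim-covering.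
   Context: A sieve on $G$ is a set of morphisms with codomain $G$ closed under precomposition; the pullback $f^*(S)$ along $f:H\to G$ is $\{g : f\circ g\in S\}$. The Grothendieck topology axioms: the maximal sieve covers (maximality); covering sieves are stable under pullback (stability); and if $S$ covers and $R$ is a sieve such that $f^*(R)$ covers for every $f\in S$ then $R$ covers (transitivity). *)

theory Defs
  imports Main "HOL-Library.FuncSet"
begin

text \<open>Finite rooted labelled transition systems. States are natural numbers
(every finite LTS is isomorphic to one of these, so this is a skeleton-like
presentation of the category D).\<close>

record 'l lts =
  verts :: "nat set"
  root  :: nat
  edges :: "(nat \<times> 'l \<times> nat) set"

definition wf_lts :: "'l set \<Rightarrow> 'l lts \<Rightarrow> bool" where
  "wf_lts L G \<longleftrightarrow> finite (verts G) \<and> finite (edges G) \<and> root G \<in> verts G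
     \<and> edges G \<subseteq> verts G \<times> L \<times> verts G"

type_synonym 'l mor = "'l lts \<times> 'l lts \<times> (nat \<Rightarrow> nat)"

definition mdom :: "'l mor \<Rightarrow> 'l lts" where "mdom m = fst m"
definition mcod :: "'l mor \<Rightarrow> 'l lts" where "mcod m = fst (snd m)"
definition mfun :: "'l mor \<Rightarrow> nat \<Rightarrow> nat" where "mfun m = snd (snd m)"

definition is_hom :: "'l set \<Rightarrow> 'l mor \<Rightarrow> bool" where
  "is_hom L m \<longleftrightarrow> wf_lts L (mdom m) \<and> wf_lts L (mcod m)
     \<and> mfun m \<in> verts (mdom m) \<rightarrow>\<^sub>E verts (mcod m)
     \<and> mfun m (root (mdom m)) = root (mcod m)
     \<and> (\<forall>u l v. (u, l, v) \<in> edges (mdom m) \<longrightarrow> (mfun m u, l, mfun m v) \<in> edges (mcod m))"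

text \<open>Composition comp g f = g o f (meaningful when mcod f = mdom g).\<close>
definition comp :: "'l mor \<Rightarrow> 'l mor \<Rightarrow> 'l mor" where
  "comp g f = (mdom f, mcod g, restrict (mfun g \<circ> mfun f) (verts (mdom f)))"

definition sieve :: "'l set \<Rightarrow> 'l mor set \<Rightarrow> 'l lts \<Rightarrow> bool" where
  "sieve L S G \<longleftrightarrow> wf_lts L G \<and> (\<forall>m\<in>S. is_hom L m \<and> mcod m = G)
     \<and> (\<forall>m\<in>S. \<forall>g. is_hom L g \<and> mcod g = mdom m \<longrightarrow> comp m g \<in> S)"

definition max_sieve :: "'l set \<Rightarrow> 'l lts \<Rightarrow> 'l mor set" where
  "max_sieve L G = {m. is_hom L m \<and> mcod m = G}"

definition pullback :: "'l set \<Rightarrow> 'l mor \<Rightarrow> 'l mor set \<Rightarrow> 'l mor set" where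
  "pullback L f S = {g. is_hom L g \<and> mcod g = mdom f \<and> comp f g \<in> S}"

definition gen_sieve :: "'l set \<Rightarrow> 'l mor \<Rightarrow> 'l mor set" where
  "gen_sieve L f = {comp f g | g. is_hom L g \<and> mcod g = mdom f}"

definition is_tree :: "'l set \<Rightarrow> 'l lts \<Rightarrow> bool" where
  "is_tree L T \<longleftrightarrow> wf_lts L T
     \<and> (\<forall>v\<in>verts T. (root T, v) \<in> {(u, w). \<exists>l. (u, l, w) \<in> edges T}\<^sup>*)
     \<and> (\<forall>u l. (u, l, root T) \<notin> edges T)
     \<and> (\<forall>v\<in>verts T. v \<noteq> root T \<longrightarrow> (\<exists>!e. e \<in> edges T \<and> snd (snd e) = v))"

definition naive_covers :: "'l set \<Rightarrow> 'l mor set \<Rightarrow> 'l lts \<Rightarrow> bool" where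
  "naive_covers L S G \<longleftrightarrow>
     (\<forall>T. is_tree L T \<longrightarrow> (\<exists>h. is_hom L (T, G, h)) \<longrightarrow> (\<exists>h. (T, G, h) \<in> S))"

definition traceLTS :: "'l \<Rightarrow> 'l lts" where
  "traceLTS a = \<lparr>verts = {0, 1}, root = 0, edges = {(0, a, 1)}\<rparr>"

definition fanLTS :: "'l \<Rightarrow> 'l lts" where
  "fanLTS a = \<lparr>verts = {0, 1, 2}, root = 0, edges = {(0, a, 1), (0, a, 2)}\<rparr>"

definition fR :: "'l \<Rightarrow> 'l mor" where
  "fR a = (traceLTS a, fanLTS a, restrict (\<lambda>x. if x = 1 then 2 else 0) {0, 1})"

definition fL :: "'l \<Rightarrow> 'l mor" where
  "fL a = (traceLTS a, fanLTS a, restrict (\<lambda>x. if x = 1 then 1 else 0) {0, 1})"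

end

theory Submission
  imports Defs
begin

text \<open>Naive-sim-covering only asks, for each tree \<open>T\<close> mapping to \<open>G\<close>, for \<^emph>\<open>some\<close> map
\<open>T \<rightarrow> G\<close> in the sieve. Maximality is then trivial, and transitivity holds because a tree
covered by a sieve on itself must contain a map \<open>T \<rightarrow> T\<close> of the sieve (the identity is
available), which composes to a map \<open>T \<rightarrow> G\<close> in \<open>R\<close>. Stability fails: every tree mapping to
the fan collapses onto the trace and factors through the right branch \<open>f\<^sub>R\<close>, so the sieve
generated by \<open>f\<^sub>R\<close> covers; but the only endomorphism of the trace is the identity, and
\<open>f\<^sub>L\<close> does not factor through \<open>f\<^sub>R\<close>, so the pullback along \<open>f\<^sub>L\<close> contains no map from the
trace tree.\<close>

lemma wf_traceLTS: "a \<in> L \<Longrightarrow> wf_lts L (traceLTS a)"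
  by (auto simp: wf_lts_def traceLTS_def)

lemma wf_fanLTS: "a \<in> L \<Longrightarrow> wf_lts L (fanLTS a)"
  by (auto simp: wf_lts_def fanLTS_def)

lemma is_tree_traceLTS: "a \<in> L \<Longrightarrow> is_tree L (traceLTS a)"
  using wf_traceLTS by (auto simp: is_tree_def traceLTS_def intro!: r_into_rtrancl)

lemma is_hom_fR: "a \<in> L \<Longrightarrow> is_hom L (fR a)"
  using wf_traceLTS wf_fanLTS
  by (auto simp: is_hom_def fR_def mdom_def mcod_def mfun_def traceLTS_def fanLTS_def)

lemma is_hom_fL: "a \<in> L \<Longrightarrow> is_hom L (fL a)"
  using wf_traceLTS wf_fanLTS
  by (auto simp: is_hom_def fL_def mdom_def mcod_def mfun_def traceLTS_def fanLTS_def)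

lemma mdom_comp [simp]: "mdom (comp g f) = mdom f"
  and mcod_comp [simp]: "mcod (comp g f) = mcod g"
  and mfun_comp [simp]: "mfun (comp g f) = restrict (mfun g \<circ> mfun f) (verts (mdom f))"
  by (auto simp: comp_def mdom_def mcod_def mfun_def)

lemma is_hom_id: "wf_lts L T \<Longrightarrow> is_hom L (T, T, restrict id (verts T))"
  by (auto simp: is_hom_def mdom_def mcod_def mfun_def wf_lts_def)

lemma is_hom_comp:
  assumes f: "is_hom L f" and g: "is_hom L g" and fg: "mcod g = mdom f"
  shows "is_hom L (comp f g)"
proof -
  have wf_dom: "wf_lts L (mdom g)"
    using g by (simp add: is_hom_def)
  have edge_verts: "u \<in> verts (mdom g)" "v \<in> verts (mdom g)" if "(u, l, v) \<in> edges (mdom g)" for u l v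
    using that wf_dom by (auto simp: wf_lts_def)
  have "root (mdom g) \<in> verts (mdom g)"
    using wf_dom by (simp add: wf_lts_def)
  with f g fg show ?thesis
    unfolding is_hom_def mdom_comp mcod_comp mfun_comp
    by (auto simp: PiE_iff dest: edge_verts)
qed

lemma comp_assoc:
  assumes "is_hom L h" "mcod h = mdom g"
  shows "comp (comp f g) h = comp f (comp g h)"
proof -
  have "mfun h x \<in> verts (mdom g)" if "x \<in> verts (mdom h)" for x
    using assms that by (auto simp: is_hom_def PiE_iff)
  then show ?thesis
    by (auto simp: comp_def mdom_def mcod_def mfun_def fun_eq_iff)
qed

lemma sieve_gen_sieve:
  assumes f: "is_hom L f"
  shows "sieve L (gen_sieve L f) (mcod f)"
  unfolding sieve_def
proof (intro conjI ballI allI impI)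
  show "wf_lts L (mcod f)"
    using f by (simp add: is_hom_def)
next
  fix m assume "m \<in> gen_sieve L f"
  then obtain g where "is_hom L g" "mcod g = mdom f" "m = comp f g"
    by (auto simp: gen_sieve_def)
  then show "is_hom L m" "mcod m = mcod f"
    using is_hom_comp[OF f] by simp_all
next
  fix m h assume "m \<in> gen_sieve L f" and h: "is_hom L h \<and> mcod h = mdom m"
  then obtain g where g: "is_hom L g" "mcod g = mdom f" "m = comp f g"
    by (auto simp: gen_sieve_def)
  with h have "comp m h = comp f (comp g h)" "is_hom L (comp g h)" "mcod (comp g h) = mdom f"
    using comp_assoc[of L h g f] is_hom_comp[OF g(1), of h] by auto
  then show "comp m h \<in> gen_sieve L f"
    unfolding gen_sieve_def by blast
qed

lemma naive_covers_max_sieve: "naive_covers L (max_sieve L G) G"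
  by (auto simp: naive_covers_def max_sieve_def mcod_def)

lemma naive_covers_tree_self:
  assumes "is_tree L T" "naive_covers L S T"
  shows "\<exists>h. (T, T, h) \<in> S"
  using assms is_hom_id[of L T] by (auto simp: naive_covers_def is_tree_def)

lemma naive_covers_transitive:
  assumes S: "naive_covers L S G"
    and pullback_covers: "\<forall>f\<in>S. naive_covers L (pullback L f R) (mdom f)"
  shows "naive_covers L R G"
  unfolding naive_covers_def
proof (intro allI impI)
  fix T assume T: "is_tree L T" and "\<exists>h. is_hom L (T, G, h)"
  with S obtain h where h: "(T, G, h) \<in> S"
    by (auto simp: naive_covers_def)
  with pullback_covers have "naive_covers L (pullback L (T, G, h) R) T"
    by (auto simp: mdom_def)
  with T obtain g where "(T, T, g) \<in> pullback L (T, G, h) R"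
    using naive_covers_tree_self by blast
  then have "comp (T, G, h) (T, T, g) \<in> R"
    by (simp add: pullback_def)
  then show "\<exists>h. (T, G, h) \<in> R"
    by (auto simp: comp_def mdom_def mcod_def)
qed

lemma naive_covers_gen_sieve:
  assumes "\<And>T h. is_tree L T \<Longrightarrow> is_hom L (T, mcod f, h) \<Longrightarrow> \<exists>g. is_hom L (T, mdom f, g)"
  shows "naive_covers L (gen_sieve L f) (mcod f)"
  unfolding naive_covers_def
proof (intro allI impI)
  fix T assume "is_tree L T" "\<exists>h. is_hom L (T, mcod f, h)"
  with assms obtain g where "is_hom L (T, mdom f, g)"
    by blast
  then have "comp f (T, mdom f, g) \<in> gen_sieve L f"
    by (auto simp: gen_sieve_def mcod_def)
  then show "\<exists>h. (T, mcod f, h) \<in> gen_sieve L f"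
    by (auto simp: comp_def mdom_def)
qed

lemma hom_to_fanLTS_collapses:
  assumes a: "a \<in> L" and h: "is_hom L (T, fanLTS a, h)"
  shows "is_hom L (T, traceLTS a, restrict (\<lambda>v. if h v = 0 then 0 else 1) (verts T))"
proof -
  have wf_T: "wf_lts L T"
    using h by (simp add: is_hom_def mdom_def)
  have "h (root T) = 0"
    using h by (simp add: is_hom_def mdom_def mcod_def mfun_def fanLTS_def)
  moreover have edge: "h u = 0 \<and> l = a \<and> h v \<noteq> 0 \<and> u \<in> verts T \<and> v \<in> verts T"
    if "(u, l, v) \<in> edges T" for u l v
  proof -
    have "(h u, l, h v) \<in> edges (fanLTS a)"
      using that h by (simp add: is_hom_def mdom_def mcod_def mfun_def)
    then show ?thesis
      using that wf_T by (auto simp: fanLTS_def wf_lts_def)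
  qed
  ultimately show ?thesis
    using wf_T wf_traceLTS[OF a]
    by (auto simp: is_hom_def mdom_def mcod_def mfun_def wf_lts_def traceLTS_def dest: edge)
qed

lemma naive_covers_gen_sieve_fR:
  assumes a: "a \<in> L"
  shows "naive_covers L (gen_sieve L (fR a)) (fanLTS a)"
  using naive_covers_gen_sieve[of L "fR a"] hom_to_fanLTS_collapses[OF a]
  by (auto simp: fR_def mdom_def mcod_def)

lemma traceLTS_endo_fixes_leaf:
  "is_hom L (traceLTS a, traceLTS a, g) \<Longrightarrow> g 1 = 1"
  by (auto simp: is_hom_def mdom_def mcod_def mfun_def traceLTS_def)

lemma not_naive_covers_pullback_fL:
  assumes a: "a \<in> L"
  shows "\<not> naive_covers L (pullback L (fL a) (gen_sieve L (fR a))) (traceLTS a)"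
proof
  assume "naive_covers L (pullback L (fL a) (gen_sieve L (fR a))) (traceLTS a)"
  then obtain h where "(traceLTS a, traceLTS a, h) \<in> pullback L (fL a) (gen_sieve L (fR a))"
    using naive_covers_tree_self is_tree_traceLTS[OF a] by blast
  then have h: "is_hom L (traceLTS a, traceLTS a, h)"
    and "comp (fL a) (traceLTS a, traceLTS a, h) \<in> gen_sieve L (fR a)"
    by (auto simp: pullback_def)
  then obtain g where g: "is_hom L g" "mcod g = traceLTS a"
    and factor: "comp (fL a) (traceLTS a, traceLTS a, h) = comp (fR a) g"
    by (auto simp: gen_sieve_def fR_def mdom_def)
  from factor have "mdom g = traceLTS a"
    by (metis mdom_comp mdom_def fst_conv)
  with g obtain k where k: "g = (traceLTS a, traceLTS a, k)" "is_hom L (traceLTS a, traceLTS a, k)"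
    by (cases g) (auto simp: mdom_def mcod_def)
  from factor have "mfun (comp (fL a) (traceLTS a, traceLTS a, h)) 1 = mfun (comp (fR a) g) 1"
    by simp
  with k traceLTS_endo_fixes_leaf[OF h] traceLTS_endo_fixes_leaf[OF k(2)] show False
    by (simp add: comp_def mfun_def mdom_def fL_def fR_def traceLTS_def)
qed

theorem mainTheorem17:
  fixes L :: "'l set" and a :: 'l
  assumes "a \<in> L"
  shows "(\<forall>G. wf_lts L G \<longrightarrow> naive_covers L (max_sieve L G) G)
     \<and> (\<forall>G S R. sieve L S G \<longrightarrow> naive_covers L S G \<longrightarrow> sieve L R G
          \<longrightarrow> (\<forall>f\<in>S. naive_covers L (pullback L f R) (mdom f))
          \<longrightarrow> naive_covers L R G)
     \<and> \<not> (\<forall>G S f. sieve L S G \<longrightarrow> naive_covers L S G \<longrightarrow> is_hom L f \<longrightarrow> mcod f = G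
          \<longrightarrow> naive_covers L (pullback L f S) (mdom f))
     \<and> is_hom L (fR a) \<and> is_hom L (fL a)
     \<and> sieve L (gen_sieve L (fR a)) (fanLTS a)
     \<and> naive_covers L (gen_sieve L (fR a)) (fanLTS a)
     \<and> \<not> naive_covers L (pullback L (fL a) (gen_sieve L (fR a))) (traceLTS a)"
proof -
  have sieve_fR: "sieve L (gen_sieve L (fR a)) (fanLTS a)"
    using sieve_gen_sieve[OF is_hom_fR[OF assms]] by (simp add: fR_def mcod_def)
  have "mcod (fL a) = fanLTS a" "mdom (fL a) = traceLTS a"
    by (simp_all add: fL_def mcod_def mdom_def)
  then have not_stable: "\<not> (\<forall>G S f. sieve L S G \<longrightarrow> naive_covers L S G \<longrightarrow> is_hom L f
      \<longrightarrow> mcod f = G \<longrightarrow> naive_covers L (pullback L f S) (mdom f))"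
    using sieve_fR naive_covers_gen_sieve_fR[OF assms] is_hom_fL[OF assms]
      not_naive_covers_pullback_fL[OF assms] by metis
  show ?thesis
    using naive_covers_max_sieve naive_covers_transitive not_stable sieve_fR
      is_hom_fR[OF assms] is_hom_fL[OF assms] naive_covers_gen_sieve_fR[OF assms]
      not_naive_covers_pullback_fL[OF assms]
    by blast
qed

end
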